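(* Let $\mathbb{C}$ be a regular majority category. Then for any three reflexive relations $A,B,C$ on any object $X$ of $\mathbb{C}$, $(A\circ B)\cap(A\circ C)\leqslant A\circ(B\cap C)$.
   Context: A category is regular if it has finite limits and coequalizers of kernel pairs and regular epimorphisms are pullback-stable; morphisms factor as regular epi followed by mono. Relations on $X$ are subobjects of $X\times X$, reflexive if the diagonal factors through them; $\cap$ is intersection (pullback) of subobjects, $\leqslant$ the order on subobjects. For $w:S\to W$ and a subobject $A$ of $W$, $w\in_S A$ means $w$ factors through a representative of $A$. The composite $R\circ S$ of relations represented by $(r_1,r_2):R_0\to X\times Y$ and $(s_1,s_2):S_0\to Y\times Z$ is the image of $(r_1p_1,s_2p_2):P\to X\times Z$, $(P,p_1,p_2)$ the pullback of $s_1$ along $r_2$. A ternary relation $R\leqslant X\times Y\times Z$ is majority-selecting if for all $S$ and $x,x':S\to X$, $y,y':S\to Y$, $z,z':S\to Z$: $(x,y,z')\in_S R$, $(x,y',z)\in_S R$, $(x',y,z)\in_S R$ imply $(x,y,z)\in_S R$. A category with products is a majority category if all its ternary relations are majority-selecting. *)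

theory Defs
  imports Main
begin

text \<open>Limits, subobjects, relations etc. are defined from scratch
  by their universal properties; no choices of constructions are made.\<close>

record ('o, 'a) category =
  Obj :: "'o set"
  Arr :: "'a set"
  Dom :: "'a \<Rightarrow> 'o"
  Cod :: "'a \<Rightarrow> 'o"
  Cmp :: "'a \<Rightarrow> 'a \<Rightarrow> 'a"   (* Cmp C g f  is  g after f *)
  Ident :: "'o \<Rightarrow> 'a"

definition hom :: "('o, 'a) category \<Rightarrow> 'o \<Rightarrow> 'o \<Rightarrow> 'a set" where
  "hom C X Y = {f \<in> Arr C. Dom C f = X \<and> Cod C f = Y}"

definition is_cat :: "('o, 'a) category \<Rightarrow> bool" where
  "is_cat C \<longleftrightarrow>
     (\<forall>f \<in> Arr C. Dom C f \<in> Obj C \<and> Cod C f \<in> Obj C) \<and>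
     (\<forall>X \<in> Obj C. Ident C X \<in> hom C X X) \<and>
     (\<forall>f \<in> Arr C. \<forall>g \<in> Arr C. Cod C f = Dom C g \<longrightarrow>
         Cmp C g f \<in> hom C (Dom C f) (Cod C g)) \<and>
     (\<forall>f \<in> Arr C. Cmp C f (Ident C (Dom C f)) = f \<and> Cmp C (Ident C (Cod C f)) f = f) \<and>
     (\<forall>f \<in> Arr C. \<forall>g \<in> Arr C. \<forall>h \<in> Arr C. Cod C f = Dom C g \<longrightarrow> Cod C g = Dom C h \<longrightarrow>
         Cmp C h (Cmp C g f) = Cmp C (Cmp C h g) f)"

definition mono :: "('o, 'a) category \<Rightarrow> 'a \<Rightarrow> bool" where
  "mono C m \<longleftrightarrow> m \<in> Arr C \<and>
     (\<forall>f \<in> Arr C. \<forall>g \<in> Arr C. Cod C f = Dom C m \<longrightarrow> Cod C g = Dom C m \<longrightarrow>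
        Dom C f = Dom C g \<longrightarrow> Cmp C m f = Cmp C m g \<longrightarrow> f = g)"

definition is_terminal :: "('o, 'a) category \<Rightarrow> 'o \<Rightarrow> bool" where
  "is_terminal C T \<longleftrightarrow> T \<in> Obj C \<and> (\<forall>X \<in> Obj C. \<exists>!f. f \<in> hom C X T)"

definition is_product :: "('o, 'a) category \<Rightarrow> 'o \<Rightarrow> 'o \<Rightarrow> 'o \<Rightarrow> 'a \<Rightarrow> 'a \<Rightarrow> bool" where
  "is_product C X Y P p q \<longleftrightarrow> X \<in> Obj C \<and> Y \<in> Obj C \<and> p \<in> hom C P X \<and> q \<in> hom C P Y \<and>
     (\<forall>S \<in> Obj C. \<forall>f \<in> hom C S X. \<forall>g \<in> hom C S Y.
        \<exists>!h. h \<in> hom C S P \<and> Cmp C p h = f \<and> Cmp C q h = g)"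

definition is_product3 ::
  "('o, 'a) category \<Rightarrow> 'o \<Rightarrow> 'o \<Rightarrow> 'o \<Rightarrow> 'o \<Rightarrow> 'a \<Rightarrow> 'a \<Rightarrow> 'a \<Rightarrow> bool" where
  "is_product3 C X Y Z P p1 p2 p3 \<longleftrightarrow> X \<in> Obj C \<and> Y \<in> Obj C \<and> Z \<in> Obj C \<and>
     p1 \<in> hom C P X \<and> p2 \<in> hom C P Y \<and> p3 \<in> hom C P Z \<and>
     (\<forall>S \<in> Obj C. \<forall>f \<in> hom C S X. \<forall>g \<in> hom C S Y. \<forall>k \<in> hom C S Z.
        \<exists>!h. h \<in> hom C S P \<and> Cmp C p1 h = f \<and> Cmp C p2 h = g \<and> Cmp C p3 h = k)"

definition is_equalizer :: "('o, 'a) category \<Rightarrow> 'a \<Rightarrow> 'a \<Rightarrow> 'o \<Rightarrow> 'a \<Rightarrow> bool" where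
  "is_equalizer C f g E e \<longleftrightarrow> f \<in> Arr C \<and> g \<in> Arr C \<and> Dom C f = Dom C g \<and> Cod C f = Cod C g \<and>
     e \<in> hom C E (Dom C f) \<and> Cmp C f e = Cmp C g e \<and>
     (\<forall>h \<in> Arr C. Cod C h = Dom C f \<longrightarrow> Cmp C f h = Cmp C g h \<longrightarrow>
        (\<exists>!k. k \<in> hom C (Dom C h) E \<and> Cmp C e k = h))"

definition is_coequalizer :: "('o, 'a) category \<Rightarrow> 'a \<Rightarrow> 'a \<Rightarrow> 'o \<Rightarrow> 'a \<Rightarrow> bool" where
  "is_coequalizer C f g Q q \<longleftrightarrow> f \<in> Arr C \<and> g \<in> Arr C \<and> Dom C f = Dom C g \<and> Cod C f = Cod C g \<and>
     q \<in> hom C (Cod C f) Q \<and> Cmp C q f = Cmp C q g \<and>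
     (\<forall>h \<in> Arr C. Dom C h = Cod C f \<longrightarrow> Cmp C h f = Cmp C h g \<longrightarrow>
        (\<exists>!k. k \<in> hom C Q (Cod C h) \<and> Cmp C k q = h))"

text \<open>Pullback square \<open>f \<circ> p = g \<circ> q\<close> with apex \<open>P\<close>; \<open>q\<close> is the pullback of \<open>f\<close> along \<open>g\<close>.\<close>
definition is_pullback :: "('o, 'a) category \<Rightarrow> 'a \<Rightarrow> 'a \<Rightarrow> 'o \<Rightarrow> 'a \<Rightarrow> 'a \<Rightarrow> bool" where
  "is_pullback C f g P p q \<longleftrightarrow> f \<in> Arr C \<and> g \<in> Arr C \<and> Cod C f = Cod C g \<and>
     p \<in> hom C P (Dom C f) \<and> q \<in> hom C P (Dom C g) \<and> Cmp C f p = Cmp C g q \<and>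
     (\<forall>S \<in> Obj C. \<forall>u \<in> hom C S (Dom C f). \<forall>v \<in> hom C S (Dom C g).
        Cmp C f u = Cmp C g v \<longrightarrow>
        (\<exists>!h. h \<in> hom C S P \<and> Cmp C p h = u \<and> Cmp C q h = v))"

definition regular_epi :: "('o, 'a) category \<Rightarrow> 'a \<Rightarrow> bool" where
  "regular_epi C e \<longleftrightarrow> (\<exists>f g. is_coequalizer C f g (Cod C e) e)"

definition has_finite_limits :: "('o, 'a) category \<Rightarrow> bool" where
  "has_finite_limits C \<longleftrightarrow> (\<exists>T. is_terminal C T) \<and>
     (\<forall>X \<in> Obj C. \<forall>Y \<in> Obj C. \<exists>P p q. is_product C X Y P p q) \<and>
     (\<forall>f \<in> Arr C. \<forall>g \<in> Arr C. Dom C f = Dom C g \<longrightarrow> Cod C f = Cod C g \<longrightarrow>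
        (\<exists>E e. is_equalizer C f g E e))"

definition regular_category :: "('o, 'a) category \<Rightarrow> bool" where
  "regular_category C \<longleftrightarrow> is_cat C \<and> has_finite_limits C \<and>
     (\<comment> \<open>coequalizers of kernel pairs\<close>
      \<forall>f \<in> Arr C. \<forall>P p q. is_pullback C f f P p q \<longrightarrow> (\<exists>Q c. is_coequalizer C p q Q c)) \<and>
     (\<comment> \<open>regular epimorphisms are pullback-stable\<close>
      \<forall>e f P p q. regular_epi C e \<longrightarrow> is_pullback C e f P p q \<longrightarrow> regular_epi C q)"

text \<open>Generalized element \<open>(x,y,z) : S \<rightarrow> X\<times>Y\<times>Z\<close> lies in the relation represented by the
  mono \<open>m\<close> into the ternary product \<open>(P,p1,p2,p3)\<close>.\<close>
definition mem3 :: "('o, 'a) category \<Rightarrow> 'a \<Rightarrow> 'a \<Rightarrow> 'a \<Rightarrow> 'a \<Rightarrow> 'a \<Rightarrow> 'a \<Rightarrow> 'a \<Rightarrow> bool" where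
  "mem3 C p1 p2 p3 m x y z \<longleftrightarrow> (\<exists>u. u \<in> hom C (Dom C x) (Dom C m) \<and>
     Cmp C p1 (Cmp C m u) = x \<and> Cmp C p2 (Cmp C m u) = y \<and> Cmp C p3 (Cmp C m u) = z)"

definition majority_selecting :: "('o, 'a) category \<Rightarrow> 'a \<Rightarrow> 'a \<Rightarrow> 'a \<Rightarrow> 'a \<Rightarrow> bool" where
  "majority_selecting C p1 p2 p3 m \<longleftrightarrow>
     (\<forall>S \<in> Obj C. \<forall>x \<in> hom C S (Cod C p1). \<forall>x' \<in> hom C S (Cod C p1).
        \<forall>y \<in> hom C S (Cod C p2). \<forall>y' \<in> hom C S (Cod C p2).
        \<forall>z \<in> hom C S (Cod C p3). \<forall>z' \<in> hom C S (Cod C p3).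
        mem3 C p1 p2 p3 m x y z' \<longrightarrow> mem3 C p1 p2 p3 m x y' z \<longrightarrow> mem3 C p1 p2 p3 m x' y z \<longrightarrow>
        mem3 C p1 p2 p3 m x y z)"

definition majority_category :: "('o, 'a) category \<Rightarrow> bool" where
  "majority_category C \<longleftrightarrow> is_cat C \<and>
     (\<forall>X \<in> Obj C. \<forall>Y \<in> Obj C. \<exists>P p q. is_product C X Y P p q) \<and>
     (\<forall>X Y Z P p1 p2 p3 m. is_product3 C X Y Z P p1 p2 p3 \<longrightarrow> mono C m \<longrightarrow> Cod C m = P \<longrightarrow>
        majority_selecting C p1 p2 p3 m)"

text \<open>A (representative of a) relation on \<open>X\<close>: a mono into a product \<open>(P,p1,p2)\<close> of \<open>X\<close> with \<open>X\<close>.\<close>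
definition reflexive_rel :: "('o, 'a) category \<Rightarrow> 'o \<Rightarrow> 'a \<Rightarrow> 'a \<Rightarrow> 'a \<Rightarrow> bool" where
  "reflexive_rel C X p1 p2 m \<longleftrightarrow> (\<exists>u. u \<in> hom C X (Dom C m) \<and>
     Cmp C p1 (Cmp C m u) = Ident C X \<and> Cmp C p2 (Cmp C m u) = Ident C X)"

text \<open>\<open>m\<close> represents the composite \<open>R \<circ> S\<close> of the relations represented by \<open>r\<close> and \<open>s\<close>
  (all into the same product \<open>(P,p1,p2)\<close>): image, via a (regular epi, mono) factorization,
  of \<open>(r1 q1, s2 q2)\<close> where \<open>(Q,q1,q2)\<close> is a pullback of \<open>s1\<close> along \<open>r2\<close>.\<close>
definition rel_composite :: "('o, 'a) category \<Rightarrow> 'o \<Rightarrow> 'a \<Rightarrow> 'a \<Rightarrow> 'a \<Rightarrow> 'a \<Rightarrow> 'a \<Rightarrow> bool" where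
  "rel_composite C P p1 p2 r s m \<longleftrightarrow> mono C m \<and> Cod C m = P \<and>
     (\<exists>Q q1 q2 e. is_pullback C (Cmp C p2 r) (Cmp C p1 s) Q q1 q2 \<and>
        regular_epi C e \<and> e \<in> hom C Q (Dom C m) \<and>
        Cmp C p1 (Cmp C m e) = Cmp C (Cmp C p1 r) q1 \<and>
        Cmp C p2 (Cmp C m e) = Cmp C (Cmp C p2 s) q2)"

definition rel_inter :: "('o, 'a) category \<Rightarrow> 'a \<Rightarrow> 'a \<Rightarrow> 'a \<Rightarrow> bool" where
  "rel_inter C a b i \<longleftrightarrow> (\<exists>Q q1 q2. is_pullback C a b Q q1 q2 \<and> i = Cmp C a q1)"

definition sub_le :: "('o, 'a) category \<Rightarrow> 'a \<Rightarrow> 'a \<Rightarrow> bool" where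
  "sub_le C a b \<longleftrightarrow> (\<exists>u. u \<in> hom C (Dom C a) (Dom C b) \<and> Cmp C b u = a)"

end

theory Submission
  imports Defs
begin

text \<open>Argue with generalized elements. A pair \<open>(x, z)\<close> lies in \<open>R \<circ> S\<close> iff, after
  precomposing with some regular epimorphism, there is a \<open>w\<close> with \<open>x R w\<close> and \<open>w S z\<close>;
  and membership in a subobject descends along regular epimorphisms. So for \<open>(x, z)\<close> in
  \<open>(A \<circ> B) \<inter> (A \<circ> C)\<close> we may assume \<open>x A w\<close>, \<open>w B z\<close>, \<open>x A w'\<close> and \<open>w' C z\<close>. The
  ternary relation \<open>T = {(x, y, z) | \<exists>w. x A w \<and> w B y \<and> w C z}\<close> then contains
  \<open>(x, z, w)\<close>, \<open>(x, w', z)\<close> and, by reflexivity, \<open>(z, z, z)\<close>; being majority-selecting it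
  contains \<open>(x, z, z)\<close>, which says exactly that \<open>(x, z) \<in> A \<circ> (B \<inter> C)\<close>.\<close>

locale regular_cat =
  fixes C :: "('o, 'a) category"
  assumes regular: "regular_category C"
begin

abbreviation cmp (infixr "\<cdot>" 55) where "g \<cdot> f \<equiv> Cmp C g f"

lemma is_cat: "is_cat C"
  using regular by (simp add: regular_category_def)

lemma Dom_in_Obj: "f \<in> Arr C \<Longrightarrow> Dom C f \<in> Obj C"
  using is_cat by (simp add: is_cat_def)

lemma comp_in_hom: "f \<in> hom C A B \<Longrightarrow> g \<in> hom C B D \<Longrightarrow> g \<cdot> f \<in> hom C A D"
  using is_cat by (auto simp: is_cat_def hom_def)

lemma comp_arr [simp]: "f \<in> Arr C \<Longrightarrow> g \<in> Arr C \<Longrightarrow> Cod C f = Dom C g \<Longrightarrow> g \<cdot> f \<in> Arr C"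
  and Dom_comp [simp]: "f \<in> Arr C \<Longrightarrow> g \<in> Arr C \<Longrightarrow> Cod C f = Dom C g \<Longrightarrow> Dom C (g \<cdot> f) = Dom C f"
  and Cod_comp [simp]: "f \<in> Arr C \<Longrightarrow> g \<in> Arr C \<Longrightarrow> Cod C f = Dom C g \<Longrightarrow> Cod C (g \<cdot> f) = Cod C g"
  using comp_in_hom[of f "Dom C f" "Cod C f" g "Cod C g"] by (auto simp: hom_def)

lemma comp_assoc [simp]:
  "f \<in> Arr C \<Longrightarrow> g \<in> Arr C \<Longrightarrow> h \<in> Arr C \<Longrightarrow> Cod C f = Dom C g \<Longrightarrow> Cod C g = Dom C h \<Longrightarrow>
   (h \<cdot> g) \<cdot> f = h \<cdot> (g \<cdot> f)"
  using is_cat by (simp add: is_cat_def)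

lemma comp_assoc_hom:
  "f \<in> hom C A B \<Longrightarrow> g \<in> hom C B D \<Longrightarrow> h \<in> hom C D E \<Longrightarrow> (h \<cdot> g) \<cdot> f = h \<cdot> (g \<cdot> f)"
  by (simp add: hom_def)

lemma comp_Ident_left [simp]: "f \<in> Arr C \<Longrightarrow> Cod C f = X \<Longrightarrow> Ident C X \<cdot> f = f"
  and comp_Ident_right [simp]: "f \<in> Arr C \<Longrightarrow> Dom C f = X \<Longrightarrow> f \<cdot> Ident C X = f"
  using is_cat by (auto simp: is_cat_def)

lemma Ident_in_hom: "X \<in> Obj C \<Longrightarrow> Ident C X \<in> hom C X X"
  using is_cat by (simp add: is_cat_def)

lemma comp_reassoc:
  assumes "g \<cdot> f = k" "h \<in> hom C A B" "f \<in> hom C B D" "g \<in> hom C D E"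
  shows "g \<cdot> (f \<cdot> h) = k \<cdot> h"
  using assms by (auto simp: hom_def simp flip: comp_assoc)

subsection \<open>Limits\<close>

lemma product_arrows:
  "is_product C X Y P p q \<Longrightarrow> p \<in> hom C P X \<and> q \<in> hom C P Y"
  by (simp add: is_product_def)

lemma product_pairing:
  assumes "is_product C X Y P p q" "f \<in> hom C S X" "g \<in> hom C S Y"
  obtains h where "h \<in> hom C S P" "p \<cdot> h = f" "q \<cdot> h = g"
proof -
  have "S \<in> Obj C" using assms(2) Dom_in_Obj by (auto simp: hom_def)
  with assms show thesis using that unfolding is_product_def by metis
qed

lemma product_arrow_eqI:
  assumes "is_product C X Y P p q" "h \<in> hom C S P" "h' \<in> hom C S P"
    and "p \<cdot> h = p \<cdot> h'" "q \<cdot> h = q \<cdot> h'"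
  shows "h = h'"
proof -
  have "S \<in> Obj C" using assms(2) Dom_in_Obj by (auto simp: hom_def)
  moreover have "p \<cdot> h \<in> hom C S X" "q \<cdot> h \<in> hom C S Y"
    using assms(1,2) comp_in_hom by (auto simp: is_product_def)
  ultimately show ?thesis using assms unfolding is_product_def by metis
qed

lemma pullback_arrows:
  "is_pullback C f g P p q \<Longrightarrow> p \<in> hom C P (Dom C f) \<and> q \<in> hom C P (Dom C g) \<and> f \<cdot> p = g \<cdot> q"
  by (simp add: is_pullback_def)

lemma pullback_pairing:
  assumes "is_pullback C f g P p q" "u \<in> hom C S (Dom C f)" "v \<in> hom C S (Dom C g)" "f \<cdot> u = g \<cdot> v"
  obtains h where "h \<in> hom C S P" "p \<cdot> h = u" "q \<cdot> h = v"
proof -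
  have "S \<in> Obj C" using assms(2) Dom_in_Obj by (auto simp: hom_def)
  with assms show thesis using that unfolding is_pullback_def by metis
qed

lemma product_exists:
  assumes "X \<in> Obj C" "Y \<in> Obj C"
  obtains P p q where "is_product C X Y P p q"
proof -
  have "\<forall>X \<in> Obj C. \<forall>Y \<in> Obj C. \<exists>P p q. is_product C X Y P p q"
    using regular by (simp add: regular_category_def has_finite_limits_def)
  then show thesis using assms that by blast
qed

lemma equalizer_exists:
  assumes "f \<in> hom C A B" "g \<in> hom C A B"
  obtains E e where "is_equalizer C f g E e"
proof -
  have "\<forall>f \<in> Arr C. \<forall>g \<in> Arr C. Dom C f = Dom C g \<longrightarrow> Cod C f = Cod C g \<longrightarrow>
      (\<exists>E e. is_equalizer C f g E e)"
    using regular by (simp add: regular_category_def has_finite_limits_def)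
  moreover have "f \<in> Arr C" "g \<in> Arr C" "Dom C f = Dom C g" "Cod C f = Cod C g"
    using assms by (auto simp: hom_def)
  ultimately show thesis using that by blast
qed

lemma equalizer_factor:
  assumes "is_equalizer C f g E e" "h \<in> hom C S (Dom C f)" "f \<cdot> h = g \<cdot> h"
  shows "\<exists>!k. k \<in> hom C S E \<and> e \<cdot> k = h"
proof -
  have "\<forall>h \<in> Arr C. Cod C h = Dom C f \<longrightarrow> f \<cdot> h = g \<cdot> h \<longrightarrow> (\<exists>!k. k \<in> hom C (Dom C h) E \<and> e \<cdot> k = h)"
    using assms(1) by (simp add: is_equalizer_def)
  from this[rule_format, of h] assms(2,3) show ?thesis by (simp add: hom_def)
qed

lemma pullback_from_product_equalizer:
  assumes f: "f \<in> hom C A Z" and g: "g \<in> hom C B Z" and pr: "is_product C A B Pr pa pb"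
    and eq: "is_equalizer C (f \<cdot> pa) (g \<cdot> pb) E e"
  shows "is_pullback C f g E (pa \<cdot> e) (pb \<cdot> e)"
  unfolding is_pullback_def
proof (intro conjI ballI impI)
  have pa: "pa \<in> hom C Pr A" and pb: "pb \<in> hom C Pr B" using product_arrows[OF pr] by auto
  have e: "e \<in> hom C E Pr" and fe: "(f \<cdot> pa) \<cdot> e = (g \<cdot> pb) \<cdot> e"
    using eq pa f by (auto simp: is_equalizer_def hom_def)
  show "f \<in> Arr C" "g \<in> Arr C" "Cod C f = Cod C g" using f g by (auto simp: hom_def)
  show "pa \<cdot> e \<in> hom C E (Dom C f)" "pb \<cdot> e \<in> hom C E (Dom C g)"
    using f g comp_in_hom[OF e pa] comp_in_hom[OF e pb] by (auto simp: hom_def)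
  show "f \<cdot> (pa \<cdot> e) = g \<cdot> (pb \<cdot> e)" using fe f g e pa pb by (simp add: hom_def)
  fix S u v assume u: "u \<in> hom C S (Dom C f)" and v: "v \<in> hom C S (Dom C g)" and uv: "f \<cdot> u = g \<cdot> v"
  obtain h where h: "h \<in> hom C S Pr" "pa \<cdot> h = u" "pb \<cdot> h = v"
    using product_pairing[OF pr, of u S v] u v f g by (auto simp: hom_def)
  have "h \<in> hom C S (Dom C (f \<cdot> pa))" "(f \<cdot> pa) \<cdot> h = (g \<cdot> pb) \<cdot> h"
    using h uv f g pa pb by (simp_all add: hom_def)
  then have "\<exists>!k. k \<in> hom C S E \<and> e \<cdot> k = h" by (rule equalizer_factor[OF eq])
  then obtain k where k: "k \<in> hom C S E" "e \<cdot> k = h"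
    and k_unique: "\<And>k'. k' \<in> hom C S E \<Longrightarrow> e \<cdot> k' = h \<Longrightarrow> k' = k"
    by blast
  show "\<exists>!k. k \<in> hom C S E \<and> (pa \<cdot> e) \<cdot> k = u \<and> (pb \<cdot> e) \<cdot> k = v"
  proof (rule ex1I[of _ k])
    show "k \<in> hom C S E \<and> (pa \<cdot> e) \<cdot> k = u \<and> (pb \<cdot> e) \<cdot> k = v"
      using k h e pa pb by (auto simp: hom_def)
  next
    fix k' assume k': "k' \<in> hom C S E \<and> (pa \<cdot> e) \<cdot> k' = u \<and> (pb \<cdot> e) \<cdot> k' = v"
    have "e \<cdot> k' \<in> hom C S Pr" using k' e comp_in_hom by blast
    then have "e \<cdot> k' = h"
      by (rule product_arrow_eqI[OF pr _ h(1)]) (use k' e pa pb h in \<open>auto simp: hom_def\<close>)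
    then show "k' = k" using k' k_unique by blast
  qed
qed

lemma pullback_exists:
  assumes f: "f \<in> hom C A Z" and g: "g \<in> hom C B Z"
  obtains P p q where "is_pullback C f g P p q"
proof -
  have "A \<in> Obj C" "B \<in> Obj C" using f g Dom_in_Obj by (auto simp: hom_def)
  then obtain Pr pa pb where pr: "is_product C A B Pr pa pb" by (rule product_exists)
  have "f \<cdot> pa \<in> hom C Pr Z" "g \<cdot> pb \<in> hom C Pr Z"
    using f g product_arrows[OF pr] comp_in_hom by blast+
  then obtain E e where "is_equalizer C (f \<cdot> pa) (g \<cdot> pb) E e" by (rule equalizer_exists)
  then show thesis using that pullback_from_product_equalizer[OF f g pr] by blast
qed

lemma product3_pairing:
  assumes "is_product3 C X Y Z P p1 p2 p3" "f \<in> hom C S X" "g \<in> hom C S Y" "k \<in> hom C S Z"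
  obtains h where "h \<in> hom C S P" "p1 \<cdot> h = f" "p2 \<cdot> h = g" "p3 \<cdot> h = k"
proof -
  have "S \<in> Obj C" using assms(2) Dom_in_Obj by (auto simp: hom_def)
  with assms show thesis using that unfolding is_product3_def by metis
qed

lemma product3_exists:
  assumes "X \<in> Obj C" "Y \<in> Obj C" "Z \<in> Obj C"
  obtains P p1 p2 p3 where "is_product3 C X Y Z P p1 p2 p3"
proof -
  obtain W qy qz where w: "is_product C Y Z W qy qz" using product_exists[OF assms(2,3)] .
  have qy: "qy \<in> hom C W Y" and qz: "qz \<in> hom C W Z" using product_arrows[OF w] by auto
  have "W \<in> Obj C" using qy Dom_in_Obj by (auto simp: hom_def)
  with assms(1) obtain P r s where p: "is_product C X W P r s" by (rule product_exists)
  have r: "r \<in> hom C P X" and s: "s \<in> hom C P W" using product_arrows[OF p] by auto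
  have "is_product3 C X Y Z P r (qy \<cdot> s) (qz \<cdot> s)"
    unfolding is_product3_def
  proof (intro conjI ballI)
    show "X \<in> Obj C" "Y \<in> Obj C" "Z \<in> Obj C" by (fact assms)+
    show "r \<in> hom C P X" "qy \<cdot> s \<in> hom C P Y" "qz \<cdot> s \<in> hom C P Z"
      using r comp_in_hom[OF s qy] comp_in_hom[OF s qz] by auto
  next
    fix S f g k assume f: "f \<in> hom C S X" and g: "g \<in> hom C S Y" and k: "k \<in> hom C S Z"
    obtain h0 where h0: "h0 \<in> hom C S W" "qy \<cdot> h0 = g" "qz \<cdot> h0 = k"
      using product_pairing[OF w g k] .
    obtain h where h: "h \<in> hom C S P" "r \<cdot> h = f" "s \<cdot> h = h0"
      using product_pairing[OF p f h0(1)] .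
    show "\<exists>!h. h \<in> hom C S P \<and> r \<cdot> h = f \<and> (qy \<cdot> s) \<cdot> h = g \<and> (qz \<cdot> s) \<cdot> h = k"
    proof (rule ex1I[of _ h])
      show "h \<in> hom C S P \<and> r \<cdot> h = f \<and> (qy \<cdot> s) \<cdot> h = g \<and> (qz \<cdot> s) \<cdot> h = k"
        using h h0 qy qz s by (auto simp: hom_def)
    next
      fix h' assume h': "h' \<in> hom C S P \<and> r \<cdot> h' = f \<and> (qy \<cdot> s) \<cdot> h' = g \<and> (qz \<cdot> s) \<cdot> h' = k"
      have "s \<cdot> h' \<in> hom C S W" using h' s comp_in_hom by blast
      then have "s \<cdot> h' = h0"
        by (rule product_arrow_eqI[OF w _ h0(1)]) (use h' h0 qy qz s in \<open>auto simp: hom_def\<close>)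
      then show "h' = h"
        by (intro product_arrow_eqI[OF p _ h(1)]) (use h' h in auto)
    qed
  qed
  then show thesis by (rule that)
qed

lemma cospan3_cone_exists:
  assumes f1: "f1 \<in> hom C A1 Z" and f2: "f2 \<in> hom C A2 Z" and f3: "f3 \<in> hom C A3 Z"
  obtains T t1 t2 t3 where "t1 \<in> hom C T A1" "t2 \<in> hom C T A2" "t3 \<in> hom C T A3"
    and "f1 \<cdot> t1 = f2 \<cdot> t2" "f1 \<cdot> t1 = f3 \<cdot> t3"
    and "\<And>S u1 u2 u3. u1 \<in> hom C S A1 \<Longrightarrow> u2 \<in> hom C S A2 \<Longrightarrow> u3 \<in> hom C S A3 \<Longrightarrow>
       f1 \<cdot> u1 = f2 \<cdot> u2 \<Longrightarrow> f1 \<cdot> u1 = f3 \<cdot> u3 \<Longrightarrow>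
       \<exists>k \<in> hom C S T. t1 \<cdot> k = u1 \<and> t2 \<cdot> k = u2 \<and> t3 \<cdot> k = u3"
proof -
  obtain Q q1 q2 where pb: "is_pullback C f1 f2 Q q1 q2" using pullback_exists[OF f1 f2] .
  have q: "q1 \<in> hom C Q A1" "q2 \<in> hom C Q A2" "f1 \<cdot> q1 = f2 \<cdot> q2"
    using pullback_arrows[OF pb] f1 f2 by (auto simp: hom_def)
  have f1q1: "f1 \<cdot> q1 \<in> hom C Q Z" using q(1) f1 comp_in_hom by blast
  obtain T v1 v2 where pb': "is_pullback C (f1 \<cdot> q1) f3 T v1 v2" using pullback_exists[OF f1q1 f3] .
  have v: "v1 \<in> hom C T Q" "v2 \<in> hom C T A3" "(f1 \<cdot> q1) \<cdot> v1 = f3 \<cdot> v2"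
    using pullback_arrows[OF pb'] f1q1 f3 by (auto simp: hom_def)
  show thesis
  proof (rule that[of "q1 \<cdot> v1" T "q2 \<cdot> v1" v2])
    show "q1 \<cdot> v1 \<in> hom C T A1" "q2 \<cdot> v1 \<in> hom C T A2" "v2 \<in> hom C T A3"
      using comp_in_hom[OF v(1) q(1)] comp_in_hom[OF v(1) q(2)] v(2) by auto
    show "f1 \<cdot> (q1 \<cdot> v1) = f2 \<cdot> (q2 \<cdot> v1)" "f1 \<cdot> (q1 \<cdot> v1) = f3 \<cdot> v2"
      using comp_reassoc[OF q(3) v(1) q(1) f1] v q f1 f2 by (auto simp: hom_def)
  next
    fix S u1 u2 u3
    assume u: "u1 \<in> hom C S A1" "u2 \<in> hom C S A2" "u3 \<in> hom C S A3"
      and eq: "f1 \<cdot> u1 = f2 \<cdot> u2" "f1 \<cdot> u1 = f3 \<cdot> u3"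
    obtain k0 where k0: "k0 \<in> hom C S Q" "q1 \<cdot> k0 = u1" "q2 \<cdot> k0 = u2"
      using pullback_pairing[OF pb, of u1 S u2] u eq f1 f2 by (auto simp: hom_def)
    have "(f1 \<cdot> q1) \<cdot> k0 = f3 \<cdot> u3" using comp_reassoc[OF refl k0(1) q(1) f1] k0(2) eq(2) by simp
    then obtain k where k: "k \<in> hom C S T" "v1 \<cdot> k = k0" "v2 \<cdot> k = u3"
      using pullback_pairing[OF pb', of k0 S u3] k0 u f1q1 f3 by (auto simp: hom_def)
    then show "\<exists>k \<in> hom C S T. (q1 \<cdot> v1) \<cdot> k = u1 \<and> (q2 \<cdot> v1) \<cdot> k = u2 \<and> v2 \<cdot> k = u3"
      using k0 q v by (auto simp: hom_def)
  qed
qed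

subsection \<open>Regular epimorphisms\<close>

lemma coequalizer_arrows:
  "is_coequalizer C f g Q q \<Longrightarrow>
    f \<in> Arr C \<and> g \<in> Arr C \<and> Dom C f = Dom C g \<and> Cod C f = Cod C g \<and> q \<in> hom C (Cod C f) Q \<and> q \<cdot> f = q \<cdot> g"
  unfolding is_coequalizer_def by (elim conjE) (intro conjI)

lemma coequalizer_factor:
  assumes "is_coequalizer C f g Q q" "h \<in> Arr C" "Dom C h = Cod C f" "h \<cdot> f = h \<cdot> g"
  shows "\<exists>!k. k \<in> hom C Q (Cod C h) \<and> k \<cdot> q = h"
proof -
  have "\<forall>h \<in> Arr C. Dom C h = Cod C f \<longrightarrow> h \<cdot> f = h \<cdot> g \<longrightarrow> (\<exists>!k. k \<in> hom C Q (Cod C h) \<and> k \<cdot> q = h)"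
    using assms(1) by (simp add: is_coequalizer_def)
  with assms(2-4) show ?thesis by blast
qed

lemma regular_epi_cancel:
  assumes e: "regular_epi C e" and u: "u \<in> hom C (Cod C e) B" and v: "v \<in> hom C (Cod C e) B"
    and eq: "u \<cdot> e = v \<cdot> e"
  shows "u = v"
proof -
  obtain f g where cq: "is_coequalizer C f g (Cod C e) e" using e by (auto simp: regular_epi_def)
  have fg: "f \<in> hom C (Dom C f) (Dom C e)" "g \<in> hom C (Dom C f) (Dom C e)" "e \<cdot> f = e \<cdot> g"
    and ea: "e \<in> hom C (Dom C e) (Cod C e)"
    using coequalizer_arrows[OF cq] by (auto simp: hom_def)
  have ue: "u \<cdot> e \<in> hom C (Dom C e) B" using comp_in_hom[OF ea u] .
  have "(u \<cdot> e) \<cdot> f = u \<cdot> (e \<cdot> f)" by (rule comp_assoc_hom[OF fg(1) ea u])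
  also have "\<dots> = (u \<cdot> e) \<cdot> g" using comp_assoc_hom[OF fg(2) ea u] fg(3) by simp
  finally have "\<exists>!k. k \<in> hom C (Cod C e) (Cod C (u \<cdot> e)) \<and> k \<cdot> e = u \<cdot> e"
    by (intro coequalizer_factor[OF cq]) (use ue fg(1) in \<open>auto simp: hom_def\<close>)
  moreover have "Cod C (u \<cdot> e) = B" using ue by (simp add: hom_def)
  ultimately have ex1: "\<exists>!k. k \<in> hom C (Cod C e) B \<and> k \<cdot> e = u \<cdot> e" by (simp only:)
  have "(THE k. k \<in> hom C (Cod C e) B \<and> k \<cdot> e = u \<cdot> e) = u"
    using u by (intro the1_equality[OF ex1]) simp
  moreover have "(THE k. k \<in> hom C (Cod C e) B \<and> k \<cdot> e = u \<cdot> e) = v"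
    using v eq by (intro the1_equality[OF ex1]) simp
  ultimately show ?thesis by simp
qed

lemma regular_epi_pullback:
  assumes e: "regular_epi C e" "e \<in> hom C A B" and u: "u \<in> hom C S B"
  obtains S' f w where "regular_epi C f" "f \<in> hom C S' S" "w \<in> hom C S' A" "e \<cdot> w = u \<cdot> f"
proof -
  obtain P w f where pb: "is_pullback C e u P w f" using pullback_exists[OF e(2) u] .
  have "\<forall>e f P p q. regular_epi C e \<longrightarrow> is_pullback C e f P p q \<longrightarrow> regular_epi C q"
    using regular by (simp add: regular_category_def)
  with e(1) pb have "regular_epi C f" by blast
  with pullback_arrows[OF pb] e u show thesis using that by (auto simp: hom_def)
qed

lemma kernel_pair_coequalizer:
  assumes "f \<in> Arr C" "is_pullback C f f P p q"
  obtains Q c where "is_coequalizer C p q Q c"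
proof -
  have "\<forall>f \<in> Arr C. \<forall>P p q. is_pullback C f f P p q \<longrightarrow> (\<exists>Q c. is_coequalizer C p q Q c)"
    using regular by (simp add: regular_category_def)
  with assms that show thesis by blast
qed

lemma mono_cancel:
  assumes "mono C m" "u \<in> hom C S (Dom C m)" "v \<in> hom C S (Dom C m)" "m \<cdot> u = m \<cdot> v"
  shows "u = v"
proof -
  have "\<forall>f \<in> Arr C. \<forall>g \<in> Arr C. Cod C f = Dom C m \<longrightarrow> Cod C g = Dom C m \<longrightarrow>
      Dom C f = Dom C g \<longrightarrow> m \<cdot> f = m \<cdot> g \<longrightarrow> f = g"
    using assms(1) by (simp add: mono_def)
  from this[rule_format, of u v] assms(2-4) show ?thesis by (simp add: hom_def)
qed

lemma mono_in_hom: "mono C m \<Longrightarrow> m \<in> hom C (Dom C m) (Cod C m)"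
  by (simp add: mono_def hom_def)

lemma regular_epi_mono_lift:
  assumes e: "regular_epi C e" "e \<in> hom C A B" and m: "mono C m"
    and h: "h \<in> hom C B (Cod C m)" and w: "w \<in> hom C A (Dom C m)" and eq: "m \<cdot> w = h \<cdot> e"
  obtains k where "k \<in> hom C B (Dom C m)" "m \<cdot> k = h"
proof -
  obtain f g where cq: "is_coequalizer C f g B e" using e by (auto simp: regular_epi_def hom_def)
  then have fg: "f \<in> Arr C" "g \<in> Arr C" "Cod C f = A" "Cod C g = A" "Dom C f = Dom C g"
    and efg: "e \<cdot> f = e \<cdot> g"
    using coequalizer_arrows[OF cq] e(2) by (auto simp: hom_def)
  have ma: "m \<in> hom C (Dom C m) (Cod C m)" using mono_in_hom[OF m] .
  have "m \<cdot> (w \<cdot> f) = h \<cdot> (e \<cdot> f)" using comp_reassoc[OF eq, of f] fg ma w e h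
    by (simp add: hom_def)
  also have "\<dots> = m \<cdot> (w \<cdot> g)" using comp_reassoc[OF eq, of g] fg ma w e h efg
    by (simp add: hom_def)
  finally have "w \<cdot> f = w \<cdot> g"
    by (rule mono_cancel[OF m, rotated 2]) (use fg w in \<open>auto simp: hom_def\<close>)
  moreover have "w \<in> Arr C" "Dom C w = Cod C f" using w fg by (auto simp: hom_def)
  ultimately have "\<exists>!k. k \<in> hom C B (Cod C w) \<and> k \<cdot> e = w"
    using coequalizer_factor[OF cq] by blast
  then obtain k where k: "k \<in> hom C B (Dom C m)" "k \<cdot> e = w" using w by (auto simp: hom_def)
  have "m \<cdot> k \<in> hom C B (Cod C m)" using k ma comp_in_hom by blast
  moreover have "(m \<cdot> k) \<cdot> e = h \<cdot> e" using k ma e eq by (simp add: hom_def)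
  moreover have "Cod C e = B" using e(2) by (simp add: hom_def)
  ultimately have "m \<cdot> k = h" using regular_epi_cancel[OF e(1)] h by metis
  with k(1) show thesis by (rule that)
qed

lemma mono_if_kernel_pair_legs_eq:
  assumes kp: "is_pullback C m m L l1 l2" and l: "l1 = l2"
  shows "mono C m"
  unfolding mono_def
proof (intro conjI ballI impI)
  show "m \<in> Arr C" using kp by (simp add: is_pullback_def)
next
  fix u v assume "u \<in> Arr C" "v \<in> Arr C" "Cod C u = Dom C m" "Cod C v = Dom C m"
    "Dom C u = Dom C v" "m \<cdot> u = m \<cdot> v"
  then obtain h where "l1 \<cdot> h = u" "l2 \<cdot> h = v"
    using pullback_pairing[OF kp, of u "Dom C u" v] by (auto simp: hom_def)
  with l show "u = v" by simp
qed

text \<open>Pulling \<open>q\<close> back along both legs of the kernel pair of \<open>m\<close> reduces the question to the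
  kernel pair of \<open>f\<close>.\<close>

lemma kernel_pair_legs_eq:
  assumes kf: "is_pullback C f f K k1 k2" and q: "regular_epi C q" "q \<in> hom C A Q" "q \<cdot> k1 = q \<cdot> k2"
    and m: "m \<in> hom C Q B" "m \<cdot> q = f" and km: "is_pullback C m m L l1 l2"
  shows "l1 = l2"
proof -
  have f: "f \<in> hom C A B" using comp_in_hom[OF q(2) m(1)] m(2) by simp
  have k: "k1 \<in> hom C K A" "k2 \<in> hom C K A" using pullback_arrows[OF kf] f by (auto simp: hom_def)
  have l: "l1 \<in> hom C L Q" "l2 \<in> hom C L Q" "m \<cdot> l1 = m \<cdot> l2"
    using pullback_arrows[OF km] m by (auto simp: hom_def)
  obtain P1 \<pi> a1 where \<pi>: "regular_epi C \<pi>" "\<pi> \<in> hom C P1 L" "a1 \<in> hom C P1 A" "q \<cdot> a1 = l1 \<cdot> \<pi>"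
    using regular_epi_pullback[OF q(1,2) l(1)] .
  have l2\<pi>: "l2 \<cdot> \<pi> \<in> hom C P1 Q" using comp_in_hom[OF \<pi>(2) l(2)] .
  obtain P2 \<rho> a2 where \<rho>: "regular_epi C \<rho>" "\<rho> \<in> hom C P2 P1" "a2 \<in> hom C P2 A"
    "q \<cdot> a2 = (l2 \<cdot> \<pi>) \<cdot> \<rho>"
    using regular_epi_pullback[OF q(1,2) l2\<pi>] .
  have a1\<rho>: "a1 \<cdot> \<rho> \<in> hom C P2 A" using comp_in_hom[OF \<rho>(2) \<pi>(3)] .
  have \<pi>\<rho>: "\<pi> \<cdot> \<rho> \<in> hom C P2 L" using comp_in_hom[OF \<rho>(2) \<pi>(2)] .
  have q_a1\<rho>: "q \<cdot> (a1 \<cdot> \<rho>) = l1 \<cdot> (\<pi> \<cdot> \<rho>)"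
    using comp_reassoc[OF \<pi>(4) \<rho>(2) \<pi>(3) q(2)] comp_assoc_hom[OF \<rho>(2) \<pi>(2) l(1)] by simp
  have q_a2: "q \<cdot> a2 = l2 \<cdot> (\<pi> \<cdot> \<rho>)"
    using \<rho>(4) comp_assoc_hom[OF \<rho>(2) \<pi>(2) l(2)] by simp
  have "f \<cdot> (a1 \<cdot> \<rho>) = m \<cdot> (l1 \<cdot> (\<pi> \<cdot> \<rho>))"
    using comp_reassoc[OF m(2) a1\<rho> q(2) m(1)] q_a1\<rho> by simp
  also have "\<dots> = f \<cdot> a2"
    using comp_reassoc[OF l(3) \<pi>\<rho> l(1) m(1)] comp_reassoc[OF m(2) \<rho>(3) q(2) m(1)] q_a2
      comp_assoc_hom[OF \<pi>\<rho> l(2) m(1)] by simp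
  finally obtain \<kappa> where \<kappa>: "\<kappa> \<in> hom C P2 K" "k1 \<cdot> \<kappa> = a1 \<cdot> \<rho>" "k2 \<cdot> \<kappa> = a2"
    using pullback_pairing[OF kf, of "a1 \<cdot> \<rho>" P2 a2] a1\<rho> \<rho>(3) f by (auto simp: hom_def)
  have "l1 \<cdot> (\<pi> \<cdot> \<rho>) = l2 \<cdot> (\<pi> \<cdot> \<rho>)"
    using comp_reassoc[OF q(3) \<kappa>(1) k(1) q(2)] comp_assoc_hom[OF \<kappa>(1) k(2) q(2)]
      q_a1\<rho> q_a2 \<kappa>(2,3) by simp
  then have "(l1 \<cdot> \<pi>) \<cdot> \<rho> = (l2 \<cdot> \<pi>) \<cdot> \<rho>"
    using comp_assoc_hom[OF \<rho>(2) \<pi>(2) l(1)] comp_assoc_hom[OF \<rho>(2) \<pi>(2) l(2)] by simp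
  then have "l1 \<cdot> \<pi> = l2 \<cdot> \<pi>"
    using regular_epi_cancel[OF \<rho>(1)] comp_in_hom[OF \<pi>(2) l(1)] l2\<pi> \<rho>(2) by (auto simp: hom_def)
  then show "l1 = l2"
    using regular_epi_cancel[OF \<pi>(1)] l \<pi>(2) by (auto simp: hom_def)
qed

lemma image_factorization:
  assumes f: "f \<in> hom C A B"
  obtains M e m where "regular_epi C e" "e \<in> hom C A M" "mono C m" "m \<in> hom C M B" "m \<cdot> e = f"
proof -
  obtain K k1 k2 where kf: "is_pullback C f f K k1 k2" using pullback_exists[OF f f] .
  have "f \<in> Arr C" using f by (simp add: hom_def)
  then obtain Q q where cq: "is_coequalizer C k1 k2 Q q" using kernel_pair_coequalizer kf by blast
  have k: "k1 \<in> hom C K A" "f \<cdot> k1 = f \<cdot> k2" using pullback_arrows[OF kf] f by (auto simp: hom_def)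
  have q: "regular_epi C q" "q \<in> hom C A Q" "q \<cdot> k1 = q \<cdot> k2"
    using cq coequalizer_arrows[OF cq] k(1) by (auto simp: regular_epi_def hom_def)
  have "\<exists>!m. m \<in> hom C Q (Cod C f) \<and> m \<cdot> q = f"
    by (rule coequalizer_factor[OF cq]) (use f k in \<open>auto simp: hom_def\<close>)
  then obtain m where m: "m \<in> hom C Q B" "m \<cdot> q = f" using f by (auto simp: hom_def)
  obtain L l1 l2 where km: "is_pullback C m m L l1 l2" using pullback_exists[OF m(1) m(1)] .
  have "mono C m"
    using mono_if_kernel_pair_legs_eq[OF km kernel_pair_legs_eq[OF kf q m km]] .
  with q m show thesis using that by blast
qed

subsection \<open>Ternary relations\<close>

lemma majority_categoryD:
  assumes "majority_category C" "is_product3 C X Y Z P p1 p2 p3" "mono C m" "Cod C m = P"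
    and "x \<in> hom C S X" "x' \<in> hom C S X" "y \<in> hom C S Y" "y' \<in> hom C S Y"
    "z \<in> hom C S Z" "z' \<in> hom C S Z"
    and "mem3 C p1 p2 p3 m x y z'" "mem3 C p1 p2 p3 m x y' z" "mem3 C p1 p2 p3 m x' y z"
  shows "mem3 C p1 p2 p3 m x y z"
proof -
  have "\<forall>X Y Z P p1 p2 p3 m. is_product3 C X Y Z P p1 p2 p3 \<longrightarrow> mono C m \<longrightarrow> Cod C m = P \<longrightarrow>
      majority_selecting C p1 p2 p3 m"
    using assms(1) by (simp add: majority_category_def)
  then have "majority_selecting C p1 p2 p3 m" using assms(2-4) by blast
  moreover have "Cod C p1 = X" "Cod C p2 = Y" "Cod C p3 = Z"
    using assms(2) by (auto simp: hom_def is_product3_def)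
  ultimately have "\<forall>S \<in> Obj C. \<forall>x \<in> hom C S X. \<forall>x' \<in> hom C S X.
      \<forall>y \<in> hom C S Y. \<forall>y' \<in> hom C S Y. \<forall>z \<in> hom C S Z. \<forall>z' \<in> hom C S Z.
        mem3 C p1 p2 p3 m x y z' \<longrightarrow> mem3 C p1 p2 p3 m x y' z \<longrightarrow> mem3 C p1 p2 p3 m x' y z \<longrightarrow>
        mem3 C p1 p2 p3 m x y z"
    by (simp only: majority_selecting_def)
  moreover have "S \<in> Obj C" using assms(5) Dom_in_Obj by (auto simp: hom_def)
  ultimately show ?thesis using assms(5-13) by blast
qed

lemma mem3_image_intro:
  assumes m: "m \<in> hom C M P3" "m \<cdot> e = g" and e: "e \<in> hom C T M" and k: "k \<in> hom C S T"
    and \<pi>: "\<pi>1 \<in> hom C P3 X1" "\<pi>2 \<in> hom C P3 X2" "\<pi>3 \<in> hom C P3 X3"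
  shows "mem3 C \<pi>1 \<pi>2 \<pi>3 m (\<pi>1 \<cdot> (g \<cdot> k)) (\<pi>2 \<cdot> (g \<cdot> k)) (\<pi>3 \<cdot> (g \<cdot> k))"
  unfolding mem3_def
proof (intro exI conjI)
  show "e \<cdot> k \<in> hom C (Dom C (\<pi>1 \<cdot> (g \<cdot> k))) (Dom C m)"
    using e k m \<pi> by (auto simp: hom_def simp flip: m(2))
  show "\<pi>1 \<cdot> (m \<cdot> (e \<cdot> k)) = \<pi>1 \<cdot> (g \<cdot> k)" "\<pi>2 \<cdot> (m \<cdot> (e \<cdot> k)) = \<pi>2 \<cdot> (g \<cdot> k)"
    "\<pi>3 \<cdot> (m \<cdot> (e \<cdot> k)) = \<pi>3 \<cdot> (g \<cdot> k)"
    using e k m(1) by (simp_all add: hom_def flip: m(2))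
qed

lemma mem3_image_cover:
  assumes e: "regular_epi C e" "e \<in> hom C T M" and m: "m \<in> hom C M P3" "m \<cdot> e = g"
    and \<pi>: "\<pi>1 \<in> hom C P3 X1" "\<pi>2 \<in> hom C P3 X2" "\<pi>3 \<in> hom C P3 X3"
    and x: "x \<in> hom C S X1" and xyz: "mem3 C \<pi>1 \<pi>2 \<pi>3 m x y z"
  obtains S' f v where "regular_epi C f" "f \<in> hom C S' S" "v \<in> hom C S' T"
    "\<pi>1 \<cdot> (g \<cdot> v) = x \<cdot> f" "\<pi>2 \<cdot> (g \<cdot> v) = y \<cdot> f" "\<pi>3 \<cdot> (g \<cdot> v) = z \<cdot> f"
proof -
  obtain u where u: "u \<in> hom C S M" "\<pi>1 \<cdot> (m \<cdot> u) = x" "\<pi>2 \<cdot> (m \<cdot> u) = y" "\<pi>3 \<cdot> (m \<cdot> u) = z"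
    using xyz x m(1) by (auto simp: mem3_def hom_def)
  obtain S' f v where f: "regular_epi C f" "f \<in> hom C S' S" and v: "v \<in> hom C S' T" "e \<cdot> v = u \<cdot> f"
    using regular_epi_pullback[OF e u(1)] .
  have "g \<cdot> v = m \<cdot> (u \<cdot> f)" using v e(2) m(1) by (simp add: hom_def flip: m(2))
  then show thesis
    using that[OF f v(1)] u(1) f(2) m(1) \<pi> by (simp add: hom_def flip: u(2-4))
qed

end

subsection \<open>Relations and generalized elements\<close>

locale regular_relations = regular_cat +
  fixes X P p1 p2
  assumes product: "is_product C X X P p1 p2"
begin

lemma projections: "p1 \<in> hom C P X" "p2 \<in> hom C P X"
  using product_arrows[OF product] by auto

definition in_rel where
  "in_rel r x y \<longleftrightarrow> (\<exists>u. u \<in> hom C (Dom C x) (Dom C r) \<and> p1 \<cdot> (r \<cdot> u) = x \<and> p2 \<cdot> (r \<cdot> u) = y)"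

lemma in_relI:
  assumes "u \<in> hom C S R" "r \<in> hom C R P" "p1 \<cdot> (r \<cdot> u) = x" "p2 \<cdot> (r \<cdot> u) = y"
  shows "in_rel r x y"
proof -
  have "Dom C x = S" "Dom C r = R"
    using assms(1,2,3) comp_in_hom[OF comp_in_hom[OF assms(1,2)] projections(1)]
    by (auto simp: hom_def)
  with assms show ?thesis unfolding in_rel_def by blast
qed

lemma in_relE:
  assumes "in_rel r x y" "x \<in> hom C S X" "r \<in> hom C R P"
  obtains u where "u \<in> hom C S R" "p1 \<cdot> (r \<cdot> u) = x" "p2 \<cdot> (r \<cdot> u) = y"
  using assms that by (auto simp: in_rel_def hom_def)

lemma in_rel_comp:
  assumes "in_rel r x y" "x \<in> hom C S X" "r \<in> hom C R P" "g \<in> hom C S' S"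
  shows "in_rel r (x \<cdot> g) (y \<cdot> g)"
proof -
  obtain u where u: "u \<in> hom C S R" "p1 \<cdot> (r \<cdot> u) = x" "p2 \<cdot> (r \<cdot> u) = y"
    using in_relE[OF assms(1-3)] .
  show ?thesis
  proof (rule in_relI[OF comp_in_hom[OF assms(4) u(1)] assms(3)])
    show "p1 \<cdot> (r \<cdot> (u \<cdot> g)) = x \<cdot> g" "p2 \<cdot> (r \<cdot> (u \<cdot> g)) = y \<cdot> g"
      unfolding u(2,3)[symmetric] using u(1) assms(3,4) projections by (simp_all add: hom_def)
  qed
qed

lemma in_rel_refl:
  assumes "reflexive_rel C X p1 p2 r" "r \<in> hom C R P" "w \<in> hom C S X"
  shows "in_rel r w w"
proof -
  obtain \<rho> where \<rho>: "\<rho> \<in> hom C X R" "p1 \<cdot> (r \<cdot> \<rho>) = Ident C X" "p2 \<cdot> (r \<cdot> \<rho>) = Ident C X"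
    using assms(1,2) by (auto simp: reflexive_rel_def hom_def)
  show ?thesis
  proof (rule in_relI[OF comp_in_hom[OF assms(3) \<rho>(1)] assms(2)])
    show "p1 \<cdot> (r \<cdot> (\<rho> \<cdot> w)) = w" "p2 \<cdot> (r \<cdot> (\<rho> \<cdot> w)) = w"
      using comp_reassoc[OF \<rho>(2) assms(3) comp_in_hom[OF \<rho>(1) assms(2)] projections(1)]
        comp_reassoc[OF \<rho>(3) assms(3) comp_in_hom[OF \<rho>(1) assms(2)] projections(2)]
        \<rho>(1) assms(2,3) by (simp_all add: hom_def)
  qed
qed

lemma in_rel_generic:
  assumes "i \<in> hom C I P"
  shows "in_rel i (p1 \<cdot> i) (p2 \<cdot> i)"
proof -
  have "I \<in> Obj C" using assms Dom_in_Obj by (auto simp: hom_def)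
  from in_relI[OF Ident_in_hom[OF this] assms] assms show ?thesis by (simp add: hom_def)
qed

lemma sub_le_if_in_rel:
  assumes i: "i \<in> hom C I P" and r: "r \<in> hom C R P" and rel: "in_rel r (p1 \<cdot> i) (p2 \<cdot> i)"
  shows "sub_le C i r"
proof -
  obtain u where u: "u \<in> hom C I R" "p1 \<cdot> (r \<cdot> u) = p1 \<cdot> i" "p2 \<cdot> (r \<cdot> u) = p2 \<cdot> i"
    using in_relE[OF rel comp_in_hom[OF i projections(1)] r] .
  have "r \<cdot> u = i" using product_arrow_eqI[OF product comp_in_hom[OF u(1) r] i] u(2,3) .
  with u(1) i r show ?thesis by (auto simp: sub_le_def hom_def)
qed

lemma rel_inter_in_hom: "rel_inter C a b i \<Longrightarrow> a \<in> hom C A P \<Longrightarrow> i \<in> hom C (Dom C i) P"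
  by (auto simp: rel_inter_def is_pullback_def hom_def)

lemma in_rel_descent:
  assumes r: "mono C r" "r \<in> hom C R P" and f: "regular_epi C f" "f \<in> hom C S' S"
    and xy: "x \<in> hom C S X" "y \<in> hom C S X" and rel: "in_rel r (x \<cdot> f) (y \<cdot> f)"
  shows "in_rel r x y"
proof -
  obtain h where h: "h \<in> hom C S P" "p1 \<cdot> h = x" "p2 \<cdot> h = y"
    using product_pairing[OF product xy] .
  obtain u where u: "u \<in> hom C S' R" "p1 \<cdot> (r \<cdot> u) = x \<cdot> f" "p2 \<cdot> (r \<cdot> u) = y \<cdot> f"
    using in_relE[OF rel comp_in_hom[OF f(2) xy(1)] r(2)] .
  have "p1 \<cdot> (r \<cdot> u) = p1 \<cdot> (h \<cdot> f)" "p2 \<cdot> (r \<cdot> u) = p2 \<cdot> (h \<cdot> f)"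
    using u(2,3) h(2,3) comp_assoc_hom[OF f(2) h(1) projections(1)]
      comp_assoc_hom[OF f(2) h(1) projections(2)] by simp_all
  then have "r \<cdot> u = h \<cdot> f"
    using product_arrow_eqI[OF product comp_in_hom[OF u(1) r(2)] comp_in_hom[OF f(2) h(1)]] by blast
  moreover have "Dom C r = R" "Cod C r = P" using r(2) by (simp_all add: hom_def)
  ultimately obtain k where "k \<in> hom C S R" "r \<cdot> k = h"
    using regular_epi_mono_lift[OF f r(1), of h u] u(1) h(1) by metis
  then show ?thesis using in_relI[OF _ r(2)] h by blast
qed

lemma in_rel_inter_iff:
  assumes i: "rel_inter C a b i" and a: "a \<in> hom C A P" and b: "b \<in> hom C B P"
    and x: "x \<in> hom C S X"
  shows "in_rel i x y \<longleftrightarrow> in_rel a x y \<and> in_rel b x y"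
proof -
  obtain Q q1 q2 where pb: "is_pullback C a b Q q1 q2" and i_def: "i = a \<cdot> q1"
    using i by (auto simp: rel_inter_def)
  have q: "q1 \<in> hom C Q A" "q2 \<in> hom C Q B" "a \<cdot> q1 = b \<cdot> q2"
    using pullback_arrows[OF pb] a b by (auto simp: hom_def)
  have i_hom: "i \<in> hom C Q P" using comp_in_hom[OF q(1) a] i_def by simp
  show ?thesis
  proof
    assume "in_rel i x y"
    then obtain u where u: "u \<in> hom C S Q" "p1 \<cdot> (i \<cdot> u) = x" "p2 \<cdot> (i \<cdot> u) = y"
      using in_relE[OF _ x i_hom] by blast
    have "i \<cdot> u = a \<cdot> (q1 \<cdot> u)" "i \<cdot> u = b \<cdot> (q2 \<cdot> u)"
      using u(1) q a b comp_reassoc[OF q(3) u(1) q(1) a] by (simp_all add: i_def hom_def)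
    then show "in_rel a x y \<and> in_rel b x y"
      using in_relI[OF comp_in_hom[OF u(1) q(1)] a] in_relI[OF comp_in_hom[OF u(1) q(2)] b] u
      by auto
  next
    assume ab: "in_rel a x y \<and> in_rel b x y"
    obtain \<alpha> where \<alpha>: "\<alpha> \<in> hom C S A" "p1 \<cdot> (a \<cdot> \<alpha>) = x" "p2 \<cdot> (a \<cdot> \<alpha>) = y"
      using in_relE[OF _ x a] ab by blast
    obtain \<beta> where \<beta>: "\<beta> \<in> hom C S B" "p1 \<cdot> (b \<cdot> \<beta>) = x" "p2 \<cdot> (b \<cdot> \<beta>) = y"
      using in_relE[OF _ x b] ab by blast
    have "a \<cdot> \<alpha> = b \<cdot> \<beta>"
      using product_arrow_eqI[OF product comp_in_hom[OF \<alpha>(1) a] comp_in_hom[OF \<beta>(1) b]] \<alpha> \<beta>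
      by simp
    then obtain k where k: "k \<in> hom C S Q" "q1 \<cdot> k = \<alpha>"
      using pullback_pairing[OF pb, of \<alpha> S \<beta>] \<alpha>(1) \<beta>(1) a b by (auto simp: hom_def)
    have "i \<cdot> k = a \<cdot> \<alpha>" using k q(1) a by (simp add: i_def hom_def flip: k(2))
    then show "in_rel i x y" using in_relI[OF k(1) i_hom] \<alpha> by simp
  qed
qed

lemma rel_compositeE:
  assumes "rel_composite C P p1 p2 r s m" "r \<in> hom C R P" "s \<in> hom C R' P"
  obtains Q q1 q2 e where "is_pullback C (p2 \<cdot> r) (p1 \<cdot> s) Q q1 q2"
    "q1 \<in> hom C Q R" "q2 \<in> hom C Q R'" "p2 \<cdot> (r \<cdot> q1) = p1 \<cdot> (s \<cdot> q2)"
    "regular_epi C e" "e \<in> hom C Q (Dom C m)" "m \<in> hom C (Dom C m) P"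
    "p1 \<cdot> (m \<cdot> e) = p1 \<cdot> (r \<cdot> q1)" "p2 \<cdot> (m \<cdot> e) = p2 \<cdot> (s \<cdot> q2)"
proof -
  obtain Q q1 q2 e where pb: "is_pullback C (p2 \<cdot> r) (p1 \<cdot> s) Q q1 q2" and e: "regular_epi C e"
    "e \<in> hom C Q (Dom C m)" "p1 \<cdot> (m \<cdot> e) = (p1 \<cdot> r) \<cdot> q1" "p2 \<cdot> (m \<cdot> e) = (p2 \<cdot> s) \<cdot> q2"
    and m: "mono C m" "Cod C m = P"
    using assms(1) by (auto simp: rel_composite_def)
  have q: "q1 \<in> hom C Q R" "q2 \<in> hom C Q R'" "(p2 \<cdot> r) \<cdot> q1 = (p1 \<cdot> s) \<cdot> q2"
    using pullback_arrows[OF pb] assms(2,3) projections by (auto simp: hom_def)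
  show thesis
  proof (rule that[OF pb q(1,2) _ e(1,2)])
    show "p2 \<cdot> (r \<cdot> q1) = p1 \<cdot> (s \<cdot> q2)" "p1 \<cdot> (m \<cdot> e) = p1 \<cdot> (r \<cdot> q1)"
      "p2 \<cdot> (m \<cdot> e) = p2 \<cdot> (s \<cdot> q2)"
      using q e(3,4) assms(2,3) projections by (simp_all add: hom_def)
    show "m \<in> hom C (Dom C m) P" using mono_in_hom[OF m(1)] m(2) by simp
  qed
qed

lemma rel_composite_mono: "rel_composite C P p1 p2 r s m \<Longrightarrow> mono C m \<and> m \<in> hom C (Dom C m) P"
  using mono_in_hom by (auto simp: rel_composite_def)

lemma in_rel_composite_intro:
  assumes m: "rel_composite C P p1 p2 r s m" and r: "r \<in> hom C R P" and s: "s \<in> hom C R' P"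
    and x: "x \<in> hom C S X" and xw: "in_rel r x w" and wy: "in_rel s w y"
  shows "in_rel m x y"
proof -
  obtain Q q1 q2 e where pb: "is_pullback C (p2 \<cdot> r) (p1 \<cdot> s) Q q1 q2"
    and q: "q1 \<in> hom C Q R" "q2 \<in> hom C Q R'"
    and e: "e \<in> hom C Q (Dom C m)" "m \<in> hom C (Dom C m) P"
      "p1 \<cdot> (m \<cdot> e) = p1 \<cdot> (r \<cdot> q1)" "p2 \<cdot> (m \<cdot> e) = p2 \<cdot> (s \<cdot> q2)"
    using rel_compositeE[OF m r s] by metis
  obtain \<alpha> where \<alpha>: "\<alpha> \<in> hom C S R" "p1 \<cdot> (r \<cdot> \<alpha>) = x" "p2 \<cdot> (r \<cdot> \<alpha>) = w"
    using in_relE[OF xw x r] .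
  have w: "w \<in> hom C S X"
    using comp_in_hom[OF comp_in_hom[OF \<alpha>(1) r] projections(2)] \<alpha>(3) by simp
  obtain \<beta> where \<beta>: "\<beta> \<in> hom C S R'" "p1 \<cdot> (s \<cdot> \<beta>) = w" "p2 \<cdot> (s \<cdot> \<beta>) = y"
    using in_relE[OF wy w s] .
  have "(p2 \<cdot> r) \<cdot> \<alpha> = (p1 \<cdot> s) \<cdot> \<beta>"
    using \<alpha> \<beta> r s projections by (simp add: hom_def)
  then obtain k where k: "k \<in> hom C S Q" "q1 \<cdot> k = \<alpha>" "q2 \<cdot> k = \<beta>"
    using pullback_pairing[OF pb, of \<alpha> S \<beta>] \<alpha>(1) \<beta>(1) r s projections by (auto simp: hom_def)
  show ?thesis
  proof (rule in_relI[OF comp_in_hom[OF k(1) e(1)] e(2)])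
    show "p1 \<cdot> (m \<cdot> (e \<cdot> k)) = x"
      using comp_reassoc[OF e(3) k(1) comp_in_hom[OF e(1,2)] projections(1)] k q \<alpha> e(1,2) r
        projections by (simp add: hom_def)
    show "p2 \<cdot> (m \<cdot> (e \<cdot> k)) = y"
      using comp_reassoc[OF e(4) k(1) comp_in_hom[OF e(1,2)] projections(2)] k q \<beta> e(1,2) s
        projections by (simp add: hom_def)
  qed
qed

lemma in_rel_composite_elim:
  assumes m: "rel_composite C P p1 p2 r s m" and r: "r \<in> hom C R P" and s: "s \<in> hom C R' P"
    and x: "x \<in> hom C S X" and xy: "in_rel m x y"
  obtains S' f w where "regular_epi C f" "f \<in> hom C S' S" "w \<in> hom C S' X"
    "in_rel r (x \<cdot> f) w" "in_rel s w (y \<cdot> f)"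
proof -
  obtain Q q1 q2 e where q: "q1 \<in> hom C Q R" "q2 \<in> hom C Q R'" "p2 \<cdot> (r \<cdot> q1) = p1 \<cdot> (s \<cdot> q2)"
    and e: "regular_epi C e" "e \<in> hom C Q (Dom C m)" "m \<in> hom C (Dom C m) P"
      "p1 \<cdot> (m \<cdot> e) = p1 \<cdot> (r \<cdot> q1)" "p2 \<cdot> (m \<cdot> e) = p2 \<cdot> (s \<cdot> q2)"
    using rel_compositeE[OF m r s] by metis
  obtain u where u: "u \<in> hom C S (Dom C m)" "p1 \<cdot> (m \<cdot> u) = x" "p2 \<cdot> (m \<cdot> u) = y"
    using in_relE[OF xy x e(3)] .
  obtain S' f v where f: "regular_epi C f" "f \<in> hom C S' S" and v: "v \<in> hom C S' Q" "e \<cdot> v = u \<cdot> f"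
    using regular_epi_pullback[OF e(1,2) u(1)] .
  define w where "w = p2 \<cdot> (r \<cdot> (q1 \<cdot> v))"
  have "p1 \<cdot> (r \<cdot> (q1 \<cdot> v)) = p1 \<cdot> (m \<cdot> (e \<cdot> v))"
    using comp_reassoc[OF e(4) v(1) comp_in_hom[OF e(2,3)] projections(1)] v(1) q(1) e(2,3) r
      projections by (simp add: hom_def)
  also have "\<dots> = x \<cdot> f"
    using v(2) comp_reassoc[OF u(2) f(2) comp_in_hom[OF u(1) e(3)] projections(1)] u(1) e(3) f(2)
      projections by (simp add: hom_def)
  finally have "in_rel r (x \<cdot> f) w"
    using in_relI[OF comp_in_hom[OF v(1) q(1)] r] w_def by simp
  moreover have "p1 \<cdot> (s \<cdot> (q2 \<cdot> v)) = w"
    using comp_reassoc[OF q(3)[symmetric] v(1) comp_in_hom[OF q(2) s] projections(1)] v(1) q(1,2) r s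
      projections by (simp add: w_def hom_def)
  moreover have "p2 \<cdot> (s \<cdot> (q2 \<cdot> v)) = p2 \<cdot> (m \<cdot> (e \<cdot> v))"
    using comp_reassoc[OF e(5) v(1) comp_in_hom[OF e(2,3)] projections(2)] v(1) q(2) e(2,3) s
      projections by (simp add: hom_def)
  moreover have "\<dots> = y \<cdot> f"
    using v(2) comp_reassoc[OF u(3) f(2) comp_in_hom[OF u(1) e(3)] projections(2)] u(1) e(3) f(2)
      projections by (simp add: hom_def)
  ultimately have "in_rel s w (y \<cdot> f)"
    using in_relI[OF comp_in_hom[OF v(1) q(2)] s] by simp
  moreover have "w \<in> hom C S' X"
    unfolding w_def using comp_in_hom v(1) q(1) r projections(2) by blast
  ultimately show thesis using that f \<open>in_rel r (x \<cdot> f) w\<close> by blast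
qed

lemma in_rel_of_composable_triple:
  assumes a: "a \<in> hom C A P" and b: "b \<in> hom C B P" and c: "c \<in> hom C D P"
    and t: "\<alpha> \<in> hom C S A" "\<beta> \<in> hom C S B" "\<gamma> \<in> hom C S D"
    and eq: "(p2 \<cdot> a) \<cdot> \<alpha> = (p1 \<cdot> b) \<cdot> \<beta>" "(p2 \<cdot> a) \<cdot> \<alpha> = (p1 \<cdot> c) \<cdot> \<gamma>"
  shows "in_rel a (p1 \<cdot> (a \<cdot> \<alpha>)) (p2 \<cdot> (a \<cdot> \<alpha>))" "in_rel b (p2 \<cdot> (a \<cdot> \<alpha>)) (p2 \<cdot> (b \<cdot> \<beta>))"
    "in_rel c (p2 \<cdot> (a \<cdot> \<alpha>)) (p2 \<cdot> (c \<cdot> \<gamma>))"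
proof -
  have "p2 \<cdot> (a \<cdot> \<alpha>) = p1 \<cdot> (b \<cdot> \<beta>)" "p2 \<cdot> (a \<cdot> \<alpha>) = p1 \<cdot> (c \<cdot> \<gamma>)"
    using eq t a b c projections by (simp_all add: hom_def)
  then show "in_rel a (p1 \<cdot> (a \<cdot> \<alpha>)) (p2 \<cdot> (a \<cdot> \<alpha>))" "in_rel b (p2 \<cdot> (a \<cdot> \<alpha>)) (p2 \<cdot> (b \<cdot> \<beta>))"
    "in_rel c (p2 \<cdot> (a \<cdot> \<alpha>)) (p2 \<cdot> (c \<cdot> \<gamma>))"
    using in_relI[OF t(1) a] in_relI[OF t(2) b] in_relI[OF t(3) c] by simp_all
qed

lemma composable_triple_of_in_rel:
  assumes a: "a \<in> hom C A P" and b: "b \<in> hom C B P" and c: "c \<in> hom C D P"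
    and x: "x \<in> hom C S X" and rels: "in_rel a x w" "in_rel b w y" "in_rel c w z"
  obtains \<alpha> \<beta> \<gamma> where "\<alpha> \<in> hom C S A" "\<beta> \<in> hom C S B" "\<gamma> \<in> hom C S D"
    "(p2 \<cdot> a) \<cdot> \<alpha> = (p1 \<cdot> b) \<cdot> \<beta>" "(p2 \<cdot> a) \<cdot> \<alpha> = (p1 \<cdot> c) \<cdot> \<gamma>"
    "p1 \<cdot> (a \<cdot> \<alpha>) = x" "p2 \<cdot> (b \<cdot> \<beta>) = y" "p2 \<cdot> (c \<cdot> \<gamma>) = z"
proof -
  obtain \<alpha> where \<alpha>: "\<alpha> \<in> hom C S A" "p1 \<cdot> (a \<cdot> \<alpha>) = x" "p2 \<cdot> (a \<cdot> \<alpha>) = w"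
    using in_relE[OF rels(1) x a] .
  have w: "w \<in> hom C S X"
    using comp_in_hom[OF comp_in_hom[OF \<alpha>(1) a] projections(2)] \<alpha>(3) by simp
  obtain \<beta> where \<beta>: "\<beta> \<in> hom C S B" "p1 \<cdot> (b \<cdot> \<beta>) = w" "p2 \<cdot> (b \<cdot> \<beta>) = y"
    using in_relE[OF rels(2) w b] .
  obtain \<gamma> where \<gamma>: "\<gamma> \<in> hom C S D" "p1 \<cdot> (c \<cdot> \<gamma>) = w" "p2 \<cdot> (c \<cdot> \<gamma>) = z"
    using in_relE[OF rels(3) w c] .
  have "(p2 \<cdot> a) \<cdot> \<alpha> = (p1 \<cdot> b) \<cdot> \<beta>" "(p2 \<cdot> a) \<cdot> \<alpha> = (p1 \<cdot> c) \<cdot> \<gamma>"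
    using \<alpha> \<beta> \<gamma> a b c projections by (simp_all add: hom_def)
  with \<alpha> \<beta> \<gamma> show thesis using that by blast
qed

text \<open>The ternary relation \<open>{(x, y, z) | \<exists>w. x a w \<and> w b y \<and> w c z}\<close>, built as the image
  of the object of composable triples.\<close>

lemma ternary_composite_exists:
  assumes a: "a \<in> hom C A P" and b: "b \<in> hom C B P" and c: "c \<in> hom C D P"
  obtains P3 \<pi>1 \<pi>2 \<pi>3 m where "is_product3 C X X X P3 \<pi>1 \<pi>2 \<pi>3" "mono C m" "Cod C m = P3"
    "\<And>S x y z w. x \<in> hom C S X \<Longrightarrow> in_rel a x w \<Longrightarrow> in_rel b w y \<Longrightarrow> in_rel c w z \<Longrightarrow>
       mem3 C \<pi>1 \<pi>2 \<pi>3 m x y z"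
    "\<And>S x y z. x \<in> hom C S X \<Longrightarrow> mem3 C \<pi>1 \<pi>2 \<pi>3 m x y z \<Longrightarrow>
       \<exists>S' f w. regular_epi C f \<and> f \<in> hom C S' S \<and> w \<in> hom C S' X \<and>
         in_rel a (x \<cdot> f) w \<and> in_rel b w (y \<cdot> f) \<and> in_rel c w (z \<cdot> f)"
proof -
  note p = projections
  obtain T t1 t2 t3 where t: "t1 \<in> hom C T A" "t2 \<in> hom C T B" "t3 \<in> hom C T D"
    and t_eq: "(p2 \<cdot> a) \<cdot> t1 = (p1 \<cdot> b) \<cdot> t2" "(p2 \<cdot> a) \<cdot> t1 = (p1 \<cdot> c) \<cdot> t3"
    and t_univ: "\<And>S u1 u2 u3. u1 \<in> hom C S A \<Longrightarrow> u2 \<in> hom C S B \<Longrightarrow> u3 \<in> hom C S D \<Longrightarrow>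
       (p2 \<cdot> a) \<cdot> u1 = (p1 \<cdot> b) \<cdot> u2 \<Longrightarrow> (p2 \<cdot> a) \<cdot> u1 = (p1 \<cdot> c) \<cdot> u3 \<Longrightarrow>
       \<exists>k \<in> hom C S T. t1 \<cdot> k = u1 \<and> t2 \<cdot> k = u2 \<and> t3 \<cdot> k = u3"
    by (rule cospan3_cone_exists[OF comp_in_hom[OF a p(2)] comp_in_hom[OF b p(1)] comp_in_hom[OF c p(1)]])
      (rule that)
  have "X \<in> Obj C" using product by (simp add: is_product_def)
  then obtain P3 \<pi>1 \<pi>2 \<pi>3 where P3: "is_product3 C X X X P3 \<pi>1 \<pi>2 \<pi>3"
    using product3_exists by blast
  have \<pi>: "\<pi>1 \<in> hom C P3 X" "\<pi>2 \<in> hom C P3 X" "\<pi>3 \<in> hom C P3 X"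
    using P3 by (simp_all add: is_product3_def)
  obtain g where g: "g \<in> hom C T P3" "\<pi>1 \<cdot> g = p1 \<cdot> (a \<cdot> t1)" "\<pi>2 \<cdot> g = p2 \<cdot> (b \<cdot> t2)"
    "\<pi>3 \<cdot> g = p2 \<cdot> (c \<cdot> t3)"
    using product3_pairing[OF P3 comp_in_hom[OF comp_in_hom[OF t(1) a] p(1)]
        comp_in_hom[OF comp_in_hom[OF t(2) b] p(2)] comp_in_hom[OF comp_in_hom[OF t(3) c] p(2)]] .
  obtain M e m where e: "regular_epi C e" "e \<in> hom C T M" and m: "mono C m" "m \<in> hom C M P3" "m \<cdot> e = g"
    using image_factorization[OF g(1)] .
  have g_comp: "\<pi>1 \<cdot> (g \<cdot> k) = p1 \<cdot> (a \<cdot> (t1 \<cdot> k))" "\<pi>2 \<cdot> (g \<cdot> k) = p2 \<cdot> (b \<cdot> (t2 \<cdot> k))"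
    "\<pi>3 \<cdot> (g \<cdot> k) = p2 \<cdot> (c \<cdot> (t3 \<cdot> k))" if "k \<in> hom C S T" for S k
    using comp_reassoc[OF g(2) that g(1) \<pi>(1)] comp_reassoc[OF g(3) that g(1) \<pi>(2)]
      comp_reassoc[OF g(4) that g(1) \<pi>(3)] that t a b c p by (simp_all add: hom_def)
  show thesis
  proof (rule that[OF P3 m(1)])
    show "Cod C m = P3" using m(2) by (simp add: hom_def)
  next
    fix S x y z w
    assume "x \<in> hom C S X" "in_rel a x w" "in_rel b w y" "in_rel c w z"
    then obtain \<alpha> \<beta> \<gamma> where "\<alpha> \<in> hom C S A" "\<beta> \<in> hom C S B" "\<gamma> \<in> hom C S D"
      "(p2 \<cdot> a) \<cdot> \<alpha> = (p1 \<cdot> b) \<cdot> \<beta>" "(p2 \<cdot> a) \<cdot> \<alpha> = (p1 \<cdot> c) \<cdot> \<gamma>"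
      and xyz: "p1 \<cdot> (a \<cdot> \<alpha>) = x" "p2 \<cdot> (b \<cdot> \<beta>) = y" "p2 \<cdot> (c \<cdot> \<gamma>) = z"
      using composable_triple_of_in_rel[OF a b c] by metis
    then obtain k where k: "k \<in> hom C S T" "t1 \<cdot> k = \<alpha>" "t2 \<cdot> k = \<beta>" "t3 \<cdot> k = \<gamma>"
      using t_univ by blast
    show "mem3 C \<pi>1 \<pi>2 \<pi>3 m x y z"
      using mem3_image_intro[OF m(2,3) e(2) k(1) \<pi>] g_comp[OF k(1)] k xyz by simp
  next
    fix S x y z
    assume x: "x \<in> hom C S X" and xyz: "mem3 C \<pi>1 \<pi>2 \<pi>3 m x y z"
    obtain S' f v where f: "regular_epi C f" "f \<in> hom C S' S" and v: "v \<in> hom C S' T"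
      and v_eq: "\<pi>1 \<cdot> (g \<cdot> v) = x \<cdot> f" "\<pi>2 \<cdot> (g \<cdot> v) = y \<cdot> f" "\<pi>3 \<cdot> (g \<cdot> v) = z \<cdot> f"
      using mem3_image_cover[OF e m(2,3) \<pi> x xyz] .
    have "(p2 \<cdot> a) \<cdot> (t1 \<cdot> v) = (p1 \<cdot> b) \<cdot> (t2 \<cdot> v)" "(p2 \<cdot> a) \<cdot> (t1 \<cdot> v) = (p1 \<cdot> c) \<cdot> (t3 \<cdot> v)"
      using comp_reassoc[OF t_eq(1) v t(1) comp_in_hom[OF a p(2)]]
        comp_reassoc[OF t_eq(2) v t(1) comp_in_hom[OF a p(2)]] v t b c p by (simp_all add: hom_def)
    note rels = in_rel_of_composable_triple[OF a b c comp_in_hom[OF v t(1)] comp_in_hom[OF v t(2)]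
        comp_in_hom[OF v t(3)] this]
    have "p2 \<cdot> (a \<cdot> (t1 \<cdot> v)) \<in> hom C S' X" using v t a p comp_in_hom by blast
    moreover have "x \<cdot> f = p1 \<cdot> (a \<cdot> (t1 \<cdot> v))" "y \<cdot> f = p2 \<cdot> (b \<cdot> (t2 \<cdot> v))"
      "z \<cdot> f = p2 \<cdot> (c \<cdot> (t3 \<cdot> v))"
      using g_comp[OF v] v_eq by simp_all
    ultimately show "\<exists>S' f w. regular_epi C f \<and> f \<in> hom C S' S \<and> w \<in> hom C S' X \<and>
       in_rel a (x \<cdot> f) w \<and> in_rel b w (y \<cdot> f) \<and> in_rel c w (z \<cdot> f)"
      using f rels by (intro exI[of _ S'] exI[of _ f] exI[of _ "p2 \<cdot> (a \<cdot> (t1 \<cdot> v))"]) simp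
  qed
qed

lemma majority_composite_step:
  assumes maj: "majority_category C"
    and a: "a \<in> hom C A P" "reflexive_rel C X p1 p2 a"
    and b: "b \<in> hom C B P" "reflexive_rel C X p1 p2 b"
    and c: "c \<in> hom C D P" "reflexive_rel C X p1 p2 c"
    and xz: "x \<in> hom C S X" "z \<in> hom C S X" and ww': "w \<in> hom C S X" "w' \<in> hom C S X"
    and rels: "in_rel a x w" "in_rel b w z" "in_rel a x w'" "in_rel c w' z"
  obtains S' f v where "regular_epi C f" "f \<in> hom C S' S" "v \<in> hom C S' X"
    "in_rel a (x \<cdot> f) v" "in_rel b v (z \<cdot> f)" "in_rel c v (z \<cdot> f)"
proof -
  obtain P3 \<pi>1 \<pi>2 \<pi>3 m where P3: "is_product3 C X X X P3 \<pi>1 \<pi>2 \<pi>3" and m: "mono C m" "Cod C m = P3"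
    and intro: "\<And>S x y z w. x \<in> hom C S X \<Longrightarrow> in_rel a x w \<Longrightarrow> in_rel b w y \<Longrightarrow> in_rel c w z \<Longrightarrow>
       mem3 C \<pi>1 \<pi>2 \<pi>3 m x y z"
    and elim: "\<And>S x y z. x \<in> hom C S X \<Longrightarrow> mem3 C \<pi>1 \<pi>2 \<pi>3 m x y z \<Longrightarrow>
       \<exists>S' f w. regular_epi C f \<and> f \<in> hom C S' S \<and> w \<in> hom C S' X \<and>
         in_rel a (x \<cdot> f) w \<and> in_rel b w (y \<cdot> f) \<and> in_rel c w (z \<cdot> f)"
    by (rule ternary_composite_exists[OF a(1) b(1) c(1)]) (rule that)
  have "mem3 C \<pi>1 \<pi>2 \<pi>3 m x z w"
    using intro[OF xz(1) rels(1,2) in_rel_refl[OF c(2,1) ww'(1)]] .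
  moreover have "mem3 C \<pi>1 \<pi>2 \<pi>3 m x w' z"
    using intro[OF xz(1) rels(3) in_rel_refl[OF b(2,1) ww'(2)] rels(4)] .
  moreover have "mem3 C \<pi>1 \<pi>2 \<pi>3 m z z z"
    using intro[OF xz(2) in_rel_refl[OF a(2,1) xz(2)] in_rel_refl[OF b(2,1) xz(2)]
        in_rel_refl[OF c(2,1) xz(2)]] .
  ultimately have "mem3 C \<pi>1 \<pi>2 \<pi>3 m x z z"
    by (rule majority_categoryD[OF maj P3 m xz(1,2,2) ww'(2) xz(2) ww'(1)])
  then obtain S' f v where "regular_epi C f" "f \<in> hom C S' S" "v \<in> hom C S' X"
    "in_rel a (x \<cdot> f) v" "in_rel b v (z \<cdot> f)" "in_rel c v (z \<cdot> f)"
    using elim[OF xz(1)] by blast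
  then show thesis by (rule that)
qed

lemma in_rel_composite_inter:
  assumes maj: "majority_category C"
    and a: "a \<in> hom C A P" "reflexive_rel C X p1 p2 a"
    and b: "b \<in> hom C B P" "reflexive_rel C X p1 p2 b"
    and c: "c \<in> hom C D P" "reflexive_rel C X p1 p2 c"
    and ab: "rel_composite C P p1 p2 a b ab" and ac: "rel_composite C P p1 p2 a c ac"
    and bc: "rel_inter C b c bc" and abc: "rel_composite C P p1 p2 a bc abc"
    and x: "x \<in> hom C S X" and z: "z \<in> hom C S X"
    and xz: "in_rel ab x z" "in_rel ac x z"
  shows "in_rel abc x z"
proof -
  have ac_hom: "ac \<in> hom C (Dom C ac) P" and abc_hom: "mono C abc" "abc \<in> hom C (Dom C abc) P"
    using rel_composite_mono ac abc by auto
  have bc_hom: "bc \<in> hom C (Dom C bc) P" using rel_inter_in_hom[OF bc b(1)] .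
  obtain S1 f1 w where f1: "regular_epi C f1" "f1 \<in> hom C S1 S" and w: "w \<in> hom C S1 X"
    and w_rel: "in_rel a (x \<cdot> f1) w" "in_rel b w (z \<cdot> f1)"
    using in_rel_composite_elim[OF ab a(1) b(1) x xz(1)] .
  have x1: "x \<cdot> f1 \<in> hom C S1 X" and z1: "z \<cdot> f1 \<in> hom C S1 X"
    using comp_in_hom f1(2) x z by blast+
  obtain S2 f2 w' where f2: "regular_epi C f2" "f2 \<in> hom C S2 S1" and w': "w' \<in> hom C S2 X"
    and w'_rel: "in_rel a ((x \<cdot> f1) \<cdot> f2) w'" "in_rel c w' ((z \<cdot> f1) \<cdot> f2)"
    using in_rel_composite_elim[OF ac a(1) c(1) x1 in_rel_comp[OF xz(2) x ac_hom f1(2)]] .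
  have x2: "(x \<cdot> f1) \<cdot> f2 \<in> hom C S2 X" and z2: "(z \<cdot> f1) \<cdot> f2 \<in> hom C S2 X"
    using comp_in_hom f2(2) x1 z1 by blast+
  obtain S3 f3 v where f3: "regular_epi C f3" "f3 \<in> hom C S3 S2" and v: "v \<in> hom C S3 X"
    and v_rel: "in_rel a (((x \<cdot> f1) \<cdot> f2) \<cdot> f3) v" "in_rel b v (((z \<cdot> f1) \<cdot> f2) \<cdot> f3)"
      "in_rel c v (((z \<cdot> f1) \<cdot> f2) \<cdot> f3)"
    using majority_composite_step[OF maj a b c x2 z2 comp_in_hom[OF f2(2) w] w'
        in_rel_comp[OF w_rel(1) x1 a(1) f2(2)] in_rel_comp[OF w_rel(2) w b(1) f2(2)] w'_rel] .
  have "in_rel bc v (((z \<cdot> f1) \<cdot> f2) \<cdot> f3)"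
    using in_rel_inter_iff[OF bc b(1) c(1) v] v_rel(2,3) by blast
  then have "in_rel abc (((x \<cdot> f1) \<cdot> f2) \<cdot> f3) (((z \<cdot> f1) \<cdot> f2) \<cdot> f3)"
    using in_rel_composite_intro[OF abc a(1) bc_hom comp_in_hom[OF f3(2) x2] v_rel(1)] by blast
  then show "in_rel abc x z"
    using in_rel_descent[OF abc_hom _ _ x z] in_rel_descent[OF abc_hom _ _ x1 z1]
      in_rel_descent[OF abc_hom _ _ x2 z2] f1 f2 f3 by blast
qed

end

theorem lemma3p1:
  fixes C :: "('o, 'a) category"
  assumes "regular_category C" and "majority_category C"
    and "is_product C X X P p1 p2"
    and "mono C a" "Cod C a = P" "reflexive_rel C X p1 p2 a"
    and "mono C b" "Cod C b = P" "reflexive_rel C X p1 p2 b"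
    and "mono C c" "Cod C c = P" "reflexive_rel C X p1 p2 c"
    and "rel_composite C P p1 p2 a b ab"
    and "rel_composite C P p1 p2 a c ac"
    and "rel_inter C b c bc"
    and "rel_composite C P p1 p2 a bc abc"
    and "rel_inter C ab ac i"
  shows "sub_le C i abc"
proof -
  interpret regular_relations C X P p1 p2
    using assms(1,3) by (intro regular_relations.intro regular_cat.intro regular_relations_axioms.intro)
  have a: "a \<in> hom C (Dom C a) P" and b: "b \<in> hom C (Dom C b) P" and c: "c \<in> hom C (Dom C c) P"
    using mono_in_hom[OF assms(4)] mono_in_hom[OF assms(7)] mono_in_hom[OF assms(10)] assms(5,8,11)
    by simp_all
  have ab: "ab \<in> hom C (Dom C ab) P" and ac: "ac \<in> hom C (Dom C ac) P"
    and abc: "abc \<in> hom C (Dom C abc) P"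
    using rel_composite_mono assms(13,14,16) by auto
  have i: "i \<in> hom C (Dom C i) P" using rel_inter_in_hom[OF assms(17) ab] .
  have x: "p1 \<cdot> i \<in> hom C (Dom C i) X" and z: "p2 \<cdot> i \<in> hom C (Dom C i) X"
    using comp_in_hom i projections by blast+
  have "in_rel ab (p1 \<cdot> i) (p2 \<cdot> i)" "in_rel ac (p1 \<cdot> i) (p2 \<cdot> i)"
    using in_rel_inter_iff[OF assms(17) ab ac x] in_rel_generic[OF i] by simp_all
  then have "in_rel abc (p1 \<cdot> i) (p2 \<cdot> i)"
    using in_rel_composite_inter[OF assms(2) a assms(6) b assms(9) c assms(12) assms(13-16) x z] by blast
  then show ?thesis by (rule sub_le_if_in_rel[OF i abc])
qed

end
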